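(* Consider feature importance schemes, i.e. rules $I$ that assign to every finite feature set $F$ and every evaluation function $\nu$ on $F$ a function $I_\nu : F \to \mathbb{R}_{\ge 0}$. Consider the following three properties of a scheme $I$: 1. (Marginal contribution) For every $F$, every evaluation function $\nu$ on $F$ and every $f\in F$: $I_\nu(f) \ge \nu(F) - \nu(F\setminus\{f\})$. 2. (Elimination) For every $F$, every evaluation function $\nu$ on $F$, every $T\subseteq F$, and every $f \in F\setminus T$: $I_\nu(f) \ge I_{\nu'}(f)$, where $(F',\nu')$ is the result of eliminating $T$ from $(F,\nu)$. 3. (Minimalism) For every scheme $J$ satisfying properties 1 and 2, and for every $F$, every evaluation function $\nu$ on $F$ and every $f\in F$: $I_\nu(f) \le J_\nu(f)$. Then the scheme $$I_\nu(f) = \max_{S \subseteq F} \Delta(f,S,\nu)$$ satisfies properties 1, 2 and 3, and it is the only scheme satisfying all three properties.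
   Context: A feature set $F$ is a finite set. An evaluation function on $F$ is a function $\nu : 2^F \to \mathbb{R}_{\ge 0}$ assigning a value to each subset of $F$, with $\nu(\emptyset)=0$. For $f\in F$ and $S\subseteq F$, the marginal gain is $\Delta(f,S,\nu) = \nu(S\cup\{f\}) - \nu(S)$. Eliminating a set $T\subseteq F$ from $(F,\nu)$ produces the feature set $F' = F\setminus T$ and the evaluation function $\nu'$ on $F'$ defined by $\nu'(S) = \nu(S)$ for all $S\subseteq F'$. The function $I_\nu(f)=\max_{S\subseteq F}\Delta(f,S,\nu)$ is called the Marginal Contribution Feature Importance (MCI). *)

theory Defs
  imports Complex_Main
begin

text \<open>An evaluation function on a finite feature set F is represented canonically by a
  function on all sets of features that is 0 outside Pow F (so evaluation functions on F
  correspond bijectively to their HOL representatives).\<close>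

definition eval_fun :: "'a set \<Rightarrow> ('a set \<Rightarrow> real) \<Rightarrow> bool" where
  "eval_fun F \<nu> \<longleftrightarrow> \<nu> {} = 0 \<and> (\<forall>S. S \<subseteq> F \<longrightarrow> \<nu> S \<ge> 0) \<and> (\<forall>S. \<not> S \<subseteq> F \<longrightarrow> \<nu> S = 0)"

type_synonym 'a scheme = "'a set \<Rightarrow> ('a set \<Rightarrow> real) \<Rightarrow> 'a \<Rightarrow> real"

definition marginal_gain :: "'a \<Rightarrow> 'a set \<Rightarrow> ('a set \<Rightarrow> real) \<Rightarrow> real" where
  "marginal_gain f S \<nu> = \<nu> (S \<union> {f}) - \<nu> S"

definition elim_set :: "'a set \<Rightarrow> 'a set \<Rightarrow> 'a set" where
  "elim_set F T = F - T"

definition elim_fun :: "'a set \<Rightarrow> ('a set \<Rightarrow> real) \<Rightarrow> 'a set \<Rightarrow> ('a set \<Rightarrow> real)" where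
  "elim_fun F \<nu> T = (\<lambda>S. if S \<subseteq> F - T then \<nu> S else 0)"

definition is_scheme :: "'a scheme \<Rightarrow> bool" where
  "is_scheme I \<longleftrightarrow> (\<forall>F \<nu>. finite F \<and> eval_fun F \<nu> \<longrightarrow> (\<forall>f\<in>F. I F \<nu> f \<ge> 0))"

definition marginal_contribution_prop :: "'a scheme \<Rightarrow> bool" where
  "marginal_contribution_prop I \<longleftrightarrow>
     (\<forall>F \<nu>. finite F \<and> eval_fun F \<nu> \<longrightarrow> (\<forall>f\<in>F. I F \<nu> f \<ge> \<nu> F - \<nu> (F - {f})))"

definition elimination_prop :: "'a scheme \<Rightarrow> bool" where
  "elimination_prop I \<longleftrightarrow>
     (\<forall>F \<nu> T. finite F \<and> eval_fun F \<nu> \<and> T \<subseteq> F \<longrightarrow>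
        (\<forall>f \<in> F - T. I F \<nu> f \<ge> I (elim_set F T) (elim_fun F \<nu> T) f))"

definition minimalism_prop :: "'a scheme \<Rightarrow> bool" where
  "minimalism_prop I \<longleftrightarrow>
     (\<forall>J. is_scheme J \<and> marginal_contribution_prop J \<and> elimination_prop J \<longrightarrow>
        (\<forall>F \<nu>. finite F \<and> eval_fun F \<nu> \<longrightarrow> (\<forall>f\<in>F. I F \<nu> f \<le> J F \<nu> f)))"

definition mci :: "'a scheme" where
  "mci F \<nu> f = Max ((\<lambda>S. marginal_gain f S \<nu>) ` Pow F)"

end

theory Submission
  imports Defs
begin

text \<open>Every scheme J with the marginal contribution and elimination properties dominates
  each marginal gain \<Delta>(f, S, \<nu>): eliminate everything outside S \<union> {f}, after which
  \<Delta>(f, S, \<nu>) is exactly the marginal contribution of f. Hence J \<ge> MCI, and MCI itself,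
  being a maximum of marginal gains, has both properties. Two minimal schemes dominate
  each other, so MCI is the unique minimal one.\<close>

lemma marginal_gain_member: "f \<in> S \<Longrightarrow> marginal_gain f S \<nu> = 0"
  unfolding marginal_gain_def by (simp add: insert_absorb)

lemma mci_ge_marginal_gain: "finite F \<Longrightarrow> S \<subseteq> F \<Longrightarrow> marginal_gain f S \<nu> \<le> mci F \<nu> f"
  unfolding mci_def by (rule Max_ge) auto

lemma mci_attained: "finite F \<Longrightarrow> \<exists>S\<subseteq>F. mci F \<nu> f = marginal_gain f S \<nu>"
proof -
  assume "finite F"
  then have "mci F \<nu> f \<in> (\<lambda>S. marginal_gain f S \<nu>) ` Pow F"
    unfolding mci_def by (intro Max_in) auto
  then show ?thesis by auto
qed

lemma eval_fun_elim: "eval_fun F \<nu> \<Longrightarrow> eval_fun (elim_set F T) (elim_fun F \<nu> T)"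
  unfolding eval_fun_def elim_set_def elim_fun_def by auto

lemma marginal_gain_elim_fun:
  "S \<union> {f} \<subseteq> F - T \<Longrightarrow> marginal_gain f S (elim_fun F \<nu> T) = marginal_gain f S \<nu>"
  unfolding marginal_gain_def elim_fun_def by auto

lemma marginal_contribution_elim_to:
  assumes "S \<subseteq> F" "f \<in> F" "f \<notin> S"
  defines "T \<equiv> F - (S \<union> {f})"
  shows "elim_fun F \<nu> T (elim_set F T) - elim_fun F \<nu> T (elim_set F T - {f})
           = marginal_gain f S \<nu>"
proof -
  have FT: "F - T = S \<union> {f}" using assms unfolding T_def by auto
  then have "elim_set F T = S \<union> {f}" "elim_set F T - {f} = S"
    using assms(3) unfolding elim_set_def by auto
  then show ?thesis
    using FT unfolding marginal_gain_def elim_fun_def by auto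
qed

lemma scheme_ge_marginal_gain:
  assumes J: "is_scheme J" "marginal_contribution_prop J" "elimination_prop J"
    and F: "finite F" "eval_fun F \<nu>" and "f \<in> F" "S \<subseteq> F"
  shows "marginal_gain f S \<nu> \<le> J F \<nu> f"
proof (cases "f \<in> S")
  case True
  then show ?thesis
    using J(1) F \<open>f \<in> F\<close> marginal_gain_member[of f S \<nu>] unfolding is_scheme_def by simp
next
  case False
  define T where "T = F - (S \<union> {f})"
  have "f \<in> elim_set F T" "finite (elim_set F T)"
    using F \<open>f \<in> F\<close> unfolding T_def elim_set_def by auto
  then have "elim_fun F \<nu> T (elim_set F T) - elim_fun F \<nu> T (elim_set F T - {f})
               \<le> J (elim_set F T) (elim_fun F \<nu> T) f"
    using J(2) eval_fun_elim[OF F(2)] unfolding marginal_contribution_prop_def by blast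
  also have "\<dots> \<le> J F \<nu> f"
    using J(3) F \<open>f \<in> F\<close> unfolding elimination_prop_def T_def by auto
  finally show ?thesis
    using marginal_contribution_elim_to[OF \<open>S \<subseteq> F\<close> \<open>f \<in> F\<close> False] by (simp add: T_def)
qed

lemma scheme_ge_mci:
  assumes "is_scheme J" "marginal_contribution_prop J" "elimination_prop J"
    and "finite F" "eval_fun F \<nu>" "f \<in> F"
  shows "mci F \<nu> f \<le> J F \<nu> f"
  using mci_attained[of F \<nu> f] scheme_ge_marginal_gain[OF assms] \<open>finite F\<close> by auto

lemma is_scheme_mci: "is_scheme mci"
  unfolding is_scheme_def
proof (intro allI impI ballI)
  fix F \<nu> f assume "finite F \<and> eval_fun F \<nu>" "f \<in> F"
  then show "0 \<le> mci F \<nu> f"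
    using mci_ge_marginal_gain[of F F f \<nu>] marginal_gain_member[of f F \<nu>] by simp
qed

lemma marginal_contribution_prop_mci: "marginal_contribution_prop mci"
  unfolding marginal_contribution_prop_def
proof (intro allI impI ballI)
  fix F \<nu> f assume "finite F \<and> eval_fun F \<nu>" "f \<in> F"
  moreover have "F - {f} \<union> {f} = F" using \<open>f \<in> F\<close> by auto
  ultimately show "\<nu> F - \<nu> (F - {f}) \<le> mci F \<nu> f"
    using mci_ge_marginal_gain[of F "F - {f}" f \<nu>] unfolding marginal_gain_def by auto
qed

lemma elimination_prop_mci: "elimination_prop mci"
  unfolding elimination_prop_def
proof (intro allI impI ballI)
  fix F \<nu> T f assume F: "finite F \<and> eval_fun F \<nu> \<and> T \<subseteq> F" and f: "f \<in> F - T"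
  obtain S where S: "S \<subseteq> F - T"
      "mci (elim_set F T) (elim_fun F \<nu> T) f = marginal_gain f S (elim_fun F \<nu> T)"
    using mci_attained[of "elim_set F T" "elim_fun F \<nu> T" f] F
    unfolding elim_set_def by auto
  then show "mci (elim_set F T) (elim_fun F \<nu> T) f \<le> mci F \<nu> f"
    using marginal_gain_elim_fun[of S f F T \<nu>] mci_ge_marginal_gain[of F S f \<nu>] F f by auto
qed

lemma minimalism_prop_mci: "minimalism_prop mci"
  unfolding minimalism_prop_def by (auto intro: scheme_ge_mci)

theorem theorem1:
  shows "is_scheme (mci :: 'a scheme) \<and> marginal_contribution_prop (mci :: 'a scheme)
    \<and> elimination_prop (mci :: 'a scheme) \<and> minimalism_prop (mci :: 'a scheme)
    \<and> (\<forall>I :: 'a scheme. is_scheme I \<and> marginal_contribution_prop I \<and> elimination_prop I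
          \<and> minimalism_prop I \<longrightarrow>
          (\<forall>F \<nu>. finite F \<and> eval_fun F \<nu> \<longrightarrow> (\<forall>f\<in>F. I F \<nu> f = mci F \<nu> f)))"
proof (intro conjI allI impI ballI)
  fix I :: "'a scheme" and F :: "'a set" and \<nu> f
  assume I: "is_scheme I \<and> marginal_contribution_prop I \<and> elimination_prop I \<and> minimalism_prop I"
    and F: "finite F \<and> eval_fun F \<nu>" and "f \<in> F"
  have "I F \<nu> f \<le> mci F \<nu> f"
    using I F \<open>f \<in> F\<close> is_scheme_mci marginal_contribution_prop_mci elimination_prop_mci
    unfolding minimalism_prop_def by blast
  moreover have "mci F \<nu> f \<le> I F \<nu> f"
    using I F \<open>f \<in> F\<close> by (intro scheme_ge_mci) auto
  ultimately show "I F \<nu> f = mci F \<nu> f" by simp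
qed (rule is_scheme_mci marginal_contribution_prop_mci elimination_prop_mci minimalism_prop_mci)+

end
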